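(* Let $X$ be a set and let $\mathcal{L}$ and $\mathcal{R}$ be two dual nests on $X$. (1) If $\mathcal{L}$ satisfies (C2) and $\mathcal{R}$ satisfies (C2)*, then $\mathcal{T}_{\mathcal{L}\cup\mathcal{R}}\subseteq\mathcal{T}_{in}^{\mathcal{L}}$. (2) If $\mathcal{L}$ satisfies (C3) and $\mathcal{R}$ satisfies (C3)*, then $\mathcal{T}_{\mathcal{L}\cup\mathcal{R}}=\mathcal{T}_{in}^{\mathcal{L}}$.
   Context: A nest on $X$ is a family of subsets of $X$ totally ordered by inclusion. For a nest $\mathcal{N}$ define $x\triangleleft_{\mathcal{N}} y$ iff there exists $N\in\mathcal{N}$ with $x\in N$, $y\notin N$. Let $x\trianglelefteq_{\mathcal{L}} y$ iff $x=y$ or $x\triangleleft_{\mathcal{L}} y$. Nests $\mathcal{L},\mathcal{R}$ are dual if for all $x,y\in X$: $x\triangleleft_{\mathcal{L}} y$ iff $y\triangleleft_{\mathcal{R}} x$. Suprema and infima are taken with respect to $\trianglelefteq_{\mathcal{L}}$. (C2): every $L\in\mathcal{L}$ has a supremum $\sup L\in X-L$. (C3): for each $x\in X$ there is $L\in\mathcal{L}$ with $\sup L=x\in X-L$, and (C2) holds. (C2)*: every $R\in\mathcal{R}$ has an infimum $\inf R\in X-R$. (C3)*: for each $x\in X$ there is $R\in\mathcal{R}$ with $\inf R=x\in X-R$, and (C2)* holds. For $k\in X$ let ${\uparrow}k=\{y : k\trianglelefteq_{\mathcal{L}} y\}$ and ${\downarrow}k=\{y : y\trianglelefteq_{\mathcal{L}}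 k\}$. The lower topology $\mathcal{T}_l$ is generated by the subbase $\{X-{\uparrow}k : k\in X\}$, the upper topology $\mathcal{T}_U$ by the subbase $\{X-{\downarrow}k : k\in X\}$, and $\mathcal{T}_{in}^{\mathcal{L}}=\mathcal{T}_U\vee\mathcal{T}_l$ is the smallest topology containing both. $\mathcal{T}_{\mathcal{L}\cup\mathcal{R}}$ is the topology generated by $\mathcal{L}\cup\mathcal{R}$ as a subbase. *)

theory Defs
  imports Main
begin

definition nest :: "'a set \<Rightarrow> 'a set set \<Rightarrow> bool" where
  "nest X N \<longleftrightarrow> N \<subseteq> Pow X \<and> (\<forall>A\<in>N. \<forall>B\<in>N. A \<subseteq> B \<or> B \<subseteq> A)"

definition nprec :: "'a set set \<Rightarrow> 'a \<Rightarrow> 'a \<Rightarrow> bool" where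
  "nprec N x y \<longleftrightarrow> (\<exists>A\<in>N. x \<in> A \<and> y \<notin> A)"

definition npreceq :: "'a set set \<Rightarrow> 'a \<Rightarrow> 'a \<Rightarrow> bool" where
  "npreceq N x y \<longleftrightarrow> x = y \<or> nprec N x y"

definition dual_nests :: "'a set \<Rightarrow> 'a set set \<Rightarrow> 'a set set \<Rightarrow> bool" where
  "dual_nests X L R \<longleftrightarrow> (\<forall>x\<in>X. \<forall>y\<in>X. nprec L x y \<longleftrightarrow> nprec R y x)"

definition is_sup :: "'a set \<Rightarrow> 'a set set \<Rightarrow> 'a set \<Rightarrow> 'a \<Rightarrow> bool" where
  "is_sup X L A s \<longleftrightarrow> s \<in> X \<and> (\<forall>a\<in>A. npreceq L a s) \<and>
     (\<forall>u\<in>X. (\<forall>a\<in>A. npreceq L a u) \<longrightarrow> npreceq L s u)"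

definition is_inf :: "'a set \<Rightarrow> 'a set set \<Rightarrow> 'a set \<Rightarrow> 'a \<Rightarrow> bool" where
  "is_inf X L A s \<longleftrightarrow> s \<in> X \<and> (\<forall>a\<in>A. npreceq L s a) \<and>
     (\<forall>u\<in>X. (\<forall>a\<in>A. npreceq L u a) \<longrightarrow> npreceq L u s)"

definition C2 :: "'a set \<Rightarrow> 'a set set \<Rightarrow> bool" where
  "C2 X L \<longleftrightarrow> (\<forall>A\<in>L. \<exists>s. is_sup X L A s \<and> s \<in> X - A)"

definition C3 :: "'a set \<Rightarrow> 'a set set \<Rightarrow> bool" where
  "C3 X L \<longleftrightarrow> (\<forall>x\<in>X. \<exists>A\<in>L. is_sup X L A x \<and> x \<in> X - A) \<and> C2 X L"

text \<open>Starred conditions for R; infima are w.r.t. the order of L.\<close>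

definition C2_star :: "'a set \<Rightarrow> 'a set set \<Rightarrow> 'a set set \<Rightarrow> bool" where
  "C2_star X L R \<longleftrightarrow> (\<forall>B\<in>R. \<exists>s. is_inf X L B s \<and> s \<in> X - B)"

definition C3_star :: "'a set \<Rightarrow> 'a set set \<Rightarrow> 'a set set \<Rightarrow> bool" where
  "C3_star X L R \<longleftrightarrow> (\<forall>x\<in>X. \<exists>B\<in>R. is_inf X L B x \<and> x \<in> X - B) \<and> C2_star X L R"

definition up_set :: "'a set \<Rightarrow> 'a set set \<Rightarrow> 'a \<Rightarrow> 'a set" where
  "up_set X L k = {y \<in> X. npreceq L k y}"

definition down_set :: "'a set \<Rightarrow> 'a set set \<Rightarrow> 'a \<Rightarrow> 'a set" where
  "down_set X L k = {y \<in> X. npreceq L y k}"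

inductive_set gen_top :: "'a set \<Rightarrow> 'a set set \<Rightarrow> 'a set set" for X S where
  carrier: "X \<in> gen_top X S"
| basis: "s \<in> S \<Longrightarrow> s \<in> gen_top X S"
| inter: "a \<in> gen_top X S \<Longrightarrow> b \<in> gen_top X S \<Longrightarrow> a \<inter> b \<in> gen_top X S"
| union: "(\<And>k. k \<in> K \<Longrightarrow> k \<in> gen_top X S) \<Longrightarrow> \<Union>K \<in> gen_top X S"

definition lower_top :: "'a set \<Rightarrow> 'a set set \<Rightarrow> 'a set set" where
  "lower_top X L = gen_top X {X - up_set X L k | k. k \<in> X}"

definition upper_top :: "'a set \<Rightarrow> 'a set set \<Rightarrow> 'a set set" where
  "upper_top X L = gen_top X {X - down_set X L k | k. k \<in> X}"

definition interval_top :: "'a set \<Rightarrow> 'a set set \<Rightarrow> 'a set set" where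
  "interval_top X L = gen_top X (upper_top X L \<union> lower_top X L)"

definition nest_top :: "'a set \<Rightarrow> 'a set set \<Rightarrow> 'a set set \<Rightarrow> 'a set set" where
  "nest_top X L R = gen_top X (L \<union> R)"

end

theory Submission
  imports Defs
begin

text \<open>Under (C2) every member of \<open>L\<close> is the complement of the up-set of its supremum, and
  dually under (C2)* every member of \<open>R\<close> is the complement of the down-set of its infimum;
  hence the subbase \<open>L \<union> R\<close> lies in the interval topology. Under (C3) and (C3)* every
  subbasic set of the lower and upper topologies arises in this way, which gives the reverse
  inclusion.\<close>

lemma gen_top_least:
  assumes "S \<subseteq> gen_top X S'"
  shows "gen_top X S \<subseteq> gen_top X S'"
proof
  fix a assume "a \<in> gen_top X S"
  then show "a \<in> gen_top X S'"
    by induct (use assms in \<open>auto intro: gen_top.intros\<close>)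
qed

lemma subbase_subset_gen_top: "S \<subseteq> gen_top X S"
  by (auto intro: gen_top.basis)

lemma lower_top_subset_interval_top: "lower_top X L \<subseteq> interval_top X L"
  unfolding interval_top_def by (auto intro: gen_top.basis)

lemma upper_top_subset_interval_top: "upper_top X L \<subseteq> interval_top X L"
  unfolding interval_top_def by (auto intro: gen_top.basis)

lemma nest_member_eq_compl_up_set_sup:
  assumes "nest X L" and "A \<in> L" and "is_sup X L A s" and "s \<notin> A"
  shows "A = X - up_set X L s"
proof
  have AX: "A \<subseteq> X" using assms(1,2) unfolding nest_def by auto
  show "A \<subseteq> X - up_set X L s"
  proof
    fix y assume y: "y \<in> A"
    have "\<not> nprec L s y"
    proof
      assume "nprec L s y"
      then obtain N where N: "N \<in> L" "s \<in> N" "y \<notin> N" unfolding nprec_def by auto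
      then have "N \<subseteq> A \<or> A \<subseteq> N" using assms(1,2) unfolding nest_def by auto
      then show False using N y assms(4) by auto
    qed
    then show "y \<in> X - up_set X L s" using y AX assms(4)
      unfolding up_set_def npreceq_def by auto
  qed
  show "X - up_set X L s \<subseteq> A"
  proof
    fix y assume y: "y \<in> X - up_set X L s"
    show "y \<in> A"
    proof (rule ccontr)
      assume "y \<notin> A"
      then have "\<forall>a\<in>A. npreceq L a y"
        using assms(2) unfolding npreceq_def nprec_def by auto
      then have "npreceq L s y" using assms(3) y unfolding is_sup_def by auto
      then show False using y unfolding up_set_def by auto
    qed
  qed
qed

lemma dual_nest_member_eq_compl_down_set_inf:
  assumes "nest X R" and "dual_nests X L R" and "B \<in> R" and "is_inf X L B s" and "s \<notin> B"
  shows "B = X - down_set X L s"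
proof
  have BX: "B \<subseteq> X" using assms(1,3) unfolding nest_def by auto
  have sX: "s \<in> X" using assms(4) unfolding is_inf_def by auto
  show "B \<subseteq> X - down_set X L s"
  proof
    fix y assume y: "y \<in> B"
    have "\<not> nprec L y s"
    proof
      assume "nprec L y s"
      then have "nprec R s y" using assms(2) y BX sX unfolding dual_nests_def by auto
      then obtain N where N: "N \<in> R" "s \<in> N" "y \<notin> N" unfolding nprec_def by auto
      then have "N \<subseteq> B \<or> B \<subseteq> N" using assms(1,3) unfolding nest_def by auto
      then show False using N y assms(5) by auto
    qed
    then show "y \<in> X - down_set X L s" using y BX assms(5)
      unfolding down_set_def npreceq_def by auto
  qed
  show "X - down_set X L s \<subseteq> B"
  proof
    fix y assume y: "y \<in> X - down_set X L s"
    show "y \<in> B"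
    proof (rule ccontr)
      assume ny: "y \<notin> B"
      have "\<forall>b\<in>B. npreceq L y b"
      proof
        fix b assume b: "b \<in> B"
        have "nprec R b y" using b ny assms(3) unfolding nprec_def by auto
        then have "nprec L y b" using assms(2) b BX y unfolding dual_nests_def by auto
        then show "npreceq L y b" unfolding npreceq_def by auto
      qed
      then have "npreceq L y s" using assms(4) y unfolding is_inf_def by auto
      then show False using y unfolding down_set_def by auto
    qed
  qed
qed

lemma C2_imp_nest_subset_lower_top:
  assumes "nest X L" and "C2 X L"
  shows "L \<subseteq> lower_top X L"
proof
  fix A assume A: "A \<in> L"
  then obtain s where s: "is_sup X L A s" "s \<in> X - A" using assms(2) unfolding C2_def by blast
  then have "A = X - up_set X L s"
    using nest_member_eq_compl_up_set_sup[OF assms(1) A] by auto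
  with s show "A \<in> lower_top X L"
    unfolding lower_top_def by (auto intro: gen_top.basis)
qed

lemma C2_star_imp_nest_subset_upper_top:
  assumes "nest X R" and "dual_nests X L R" and "C2_star X L R"
  shows "R \<subseteq> upper_top X L"
proof
  fix B assume B: "B \<in> R"
  then obtain s where s: "is_inf X L B s" "s \<in> X - B"
    using assms(3) unfolding C2_star_def by blast
  then have "B = X - down_set X L s"
    using dual_nest_member_eq_compl_down_set_inf[OF assms(1,2) B] by auto
  with s show "B \<in> upper_top X L"
    unfolding upper_top_def by (auto intro: gen_top.basis)
qed

lemma C3_imp_lower_subbase_subset_nest:
  assumes "nest X L" and "C3 X L"
  shows "{X - up_set X L k | k. k \<in> X} \<subseteq> L"
proof clarify
  fix k assume "k \<in> X"
  then obtain A where A: "A \<in> L" "is_sup X L A k" "k \<in> X - A"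
    using assms(2) unfolding C3_def by blast
  then show "X - up_set X L k \<in> L"
    using nest_member_eq_compl_up_set_sup[OF assms(1)] by auto
qed

lemma C3_star_imp_upper_subbase_subset_nest:
  assumes "nest X R" and "dual_nests X L R" and "C3_star X L R"
  shows "{X - down_set X L k | k. k \<in> X} \<subseteq> R"
proof clarify
  fix k assume "k \<in> X"
  then obtain B where B: "B \<in> R" "is_inf X L B k" "k \<in> X - B"
    using assms(3) unfolding C3_star_def by blast
  then show "X - down_set X L k \<in> R"
    using dual_nest_member_eq_compl_down_set_inf[OF assms(1,2)] by auto
qed

lemma nest_top_subset_interval_top:
  assumes "nest X L" and "nest X R" and "dual_nests X L R" and "C2 X L" and "C2_star X L R"
  shows "nest_top X L R \<subseteq> interval_top X L"
proof -
  have "L \<subseteq> interval_top X L"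
    using C2_imp_nest_subset_lower_top[OF assms(1,4)] lower_top_subset_interval_top
    by (rule order_trans)
  moreover have "R \<subseteq> interval_top X L"
    using C2_star_imp_nest_subset_upper_top[OF assms(2,3,5)] upper_top_subset_interval_top
    by (rule order_trans)
  ultimately have "L \<union> R \<subseteq> interval_top X L"
    by (rule Un_least)
  then show ?thesis
    unfolding nest_top_def interval_top_def by (rule gen_top_least)
qed

lemma interval_top_subset_nest_top:
  assumes "nest X L" and "nest X R" and "dual_nests X L R" and "C3 X L" and "C3_star X L R"
  shows "interval_top X L \<subseteq> nest_top X L R"
proof -
  have L: "L \<subseteq> nest_top X L R" and R: "R \<subseteq> nest_top X L R"
    using subbase_subset_gen_top[of "L \<union> R" X] unfolding nest_top_def by auto
  have "lower_top X L \<subseteq> nest_top X L R"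
    using order_trans[OF C3_imp_lower_subbase_subset_nest[OF assms(1,4)] L]
    unfolding lower_top_def nest_top_def by (rule gen_top_least)
  moreover have "upper_top X L \<subseteq> nest_top X L R"
    using order_trans[OF C3_star_imp_upper_subbase_subset_nest[OF assms(2,3,5)] R]
    unfolding upper_top_def nest_top_def by (rule gen_top_least)
  ultimately have "upper_top X L \<union> lower_top X L \<subseteq> nest_top X L R"
    by auto
  then show ?thesis
    unfolding interval_top_def nest_top_def by (rule gen_top_least)
qed

theorem theorem3p3:
  fixes X :: "'a set" and L R :: "'a set set"
  assumes "nest X L" and "nest X R" and "dual_nests X L R"
  shows "(C2 X L \<and> C2_star X L R \<longrightarrow> nest_top X L R \<subseteq> interval_top X L)
       \<and> (C3 X L \<and> C3_star X L R \<longrightarrow> nest_top X L R = interval_top X L)"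
proof (intro conjI impI)
  assume "C2 X L \<and> C2_star X L R"
  then show "nest_top X L R \<subseteq> interval_top X L"
    using nest_top_subset_interval_top[OF assms] by blast
next
  assume C3: "C3 X L \<and> C3_star X L R"
  then have "C2 X L" "C2_star X L R" unfolding C3_def C3_star_def by auto
  with C3 show "nest_top X L R = interval_top X L"
    using nest_top_subset_interval_top[OF assms] interval_top_subset_nest_top[OF assms]
    by blast
qed

end
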